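(* Let $h$ be a binary function symbol interpreted as associative and idempotent, let $a,b$ be distinct free constants, and let $x$ be a variable. Let $\mathcal{W}(x,\{a,b\})$ be the set of terms of the form $h(x,s_1,\ldots,s_n,x)$ with $n\ge 0$ and each $s_i\in\{x,a,b\}$. Then every $t\in\mathcal{W}(x,\{a,b\})$ is an $AI$-generalization of $h(a,b)$ and $h(b,a)$, i.e. $\mathcal{W}(x,\{a,b\})\subseteq \mathcal{G}_{AI}(h(a,b),h(b,a))$.
   Context: Terms are built from a countable set of variables and a set of function symbols with fixed arities; substitutions map variables to terms, are the identity on all but finitely many variables, and are extended homomorphically to terms (written postfix, $t\sigma$). $AI$ denotes the equational theory generated by $h(x,h(y,z)) = h(h(x,y),z)$ and $h(x,x)=x$ (all other symbols free), and $s\approx_{AI} t$ means $s=t$ holds in every model of these axioms. Because $h$ is associative, $h(u_1,\ldots,u_m)$ for $m\ge2$ denotes the flattened $h$-product of $u_1,\ldots,u_m$. A term $r$ is an $AI$-generalization of terms $s$ and $t$ if there exist substitutions $\sigma,\tau$ with $r\sigma\approx_{AI} s$ and $r\tau\approx_{AI} t$; $\mathcal{G}_{AI}(s,t)$ is the set of all such $r$. *)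

theory Defs
  imports Main
begin

datatype ('f, 'v) trm = Var 'v | Fun 'f "('f, 'v) trm list"

fun wf_trm :: "('f \<Rightarrow> nat) \<Rightarrow> ('f, 'v) trm \<Rightarrow> bool" where
  "wf_trm ar (Var x) = True"
| "wf_trm ar (Fun f ts) = (length ts = ar f \<and> (\<forall>t \<in> set ts. wf_trm ar t))"

fun subst_apply :: "('f, 'v) trm \<Rightarrow> ('v \<Rightarrow> ('f, 'v) trm) \<Rightarrow> ('f, 'v) trm" where
  "subst_apply (Var x) \<sigma> = \<sigma> x"
| "subst_apply (Fun f ts) \<sigma> = Fun f (map (\<lambda>t. subst_apply t \<sigma>) ts)"

definition is_subst :: "('f \<Rightarrow> nat) \<Rightarrow> ('v \<Rightarrow> ('f, 'v) trm) \<Rightarrow> bool" where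
  "is_subst ar \<sigma> \<longleftrightarrow> finite {x. \<sigma> x \<noteq> Var x} \<and> (\<forall>x. wf_trm ar (\<sigma> x))"

inductive ai_eq :: "'f \<Rightarrow> ('f, 'v) trm \<Rightarrow> ('f, 'v) trm \<Rightarrow> bool" for h :: 'f where
  assoc: "ai_eq h (Fun h [s, Fun h [t, u]]) (Fun h [Fun h [s, t], u])"
| idem: "ai_eq h (Fun h [s, s]) s"
| refl: "ai_eq h t t"
| sym: "ai_eq h s t \<Longrightarrow> ai_eq h t s"
| trans: "ai_eq h s t \<Longrightarrow> ai_eq h t u \<Longrightarrow> ai_eq h s u"
| cong: "list_all2 (ai_eq h) ss ts \<Longrightarrow> ai_eq h (Fun f ss) (Fun f ts)"

definition gen_AI :: "('f \<Rightarrow> nat) \<Rightarrow> 'f \<Rightarrow> ('f, 'v) trm \<Rightarrow> ('f, 'v) trm \<Rightarrow> ('f, 'v) trm set" where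
  "gen_AI ar h s t = {r. wf_trm ar r \<and> (\<exists>\<sigma> \<tau>. is_subst ar \<sigma> \<and> is_subst ar \<tau> \<and>
      ai_eq h (subst_apply r \<sigma>) s \<and> ai_eq h (subst_apply r \<tau>) t)}"

text \<open>Flattened h-product h(u_1,...,u_m) (right-nested; for m = 1 just u_1).\<close>
fun hprod :: "'f \<Rightarrow> ('f, 'v) trm list \<Rightarrow> ('f, 'v) trm" where
  "hprod h [] = undefined"
| "hprod h [u] = u"
| "hprod h (u # us) = Fun h [u, hprod h us]"

definition W_set :: "'f \<Rightarrow> 'v \<Rightarrow> 'f \<Rightarrow> 'f \<Rightarrow> ('f, 'v) trm set" where
  "W_set h x a b = {hprod h ([Var x] @ ss @ [Var x]) | ss.
      set ss \<subseteq> {Var x, Fun a [], Fun b []}}"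

end

theory Submission
  imports Defs
begin

text \<open>Under the substitution \<open>x \<mapsto> h(a,b)\<close> a term of \<open>W(x,{a,b})\<close> becomes, after flattening,
  the word \<open>ab w ab\<close> for some word \<open>w\<close> over \<open>{a,b}\<close>. In a band (associative and idempotent)
  every product \<open>ab w\<close> equals \<open>ab\<close> or \<open>aba\<close>, as appending \<open>a\<close> or \<open>b\<close> maps this two-element
  set into itself; hence \<open>ab w ab\<close> equals \<open>abab = ab\<close> or \<open>abaab = ab\<close>. The substitution
  \<open>x \<mapsto> h(b,a)\<close> is handled by the same argument with \<open>a\<close> and \<open>b\<close> swapped.\<close>

declare ai_eq.trans[trans]

abbreviation ai_eq_hprod :: "'f \<Rightarrow> ('f, 'v) trm list \<Rightarrow> ('f, 'v) trm list \<Rightarrow> bool" where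
  "ai_eq_hprod h us vs \<equiv> ai_eq h (hprod h us) (hprod h vs)"

lemma ai_eq_Fun2: "ai_eq h s s' \<Longrightarrow> ai_eq h t t' \<Longrightarrow> ai_eq h (Fun f [s, t]) (Fun f [s', t'])"
  by (rule ai_eq.cong) simp

lemma hprod_Cons: "us \<noteq> [] \<Longrightarrow> hprod h (u # us) = Fun h [u, hprod h us]"
  by (cases us) auto

lemma ai_eq_hprod_append:
  assumes "xs \<noteq> []" and "ys \<noteq> []"
  shows "ai_eq h (hprod h (xs @ ys)) (Fun h [hprod h xs, hprod h ys])"
  using assms(1)
proof (induction xs)
  case Nil
  then show ?case by simp
next
  case (Cons u xs)
  show ?case
  proof (cases "xs = []")
    case True
    then show ?thesis using assms(2) by (simp add: hprod_Cons ai_eq.refl)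
  next
    case False
    have "hprod h ((u # xs) @ ys) = Fun h [u, hprod h (xs @ ys)]"
      using assms(2) by (simp add: hprod_Cons)
    also have "ai_eq h \<dots> (Fun h [u, Fun h [hprod h xs, hprod h ys]])"
      using Cons.IH False by (intro ai_eq_Fun2 ai_eq.refl)
    also have "ai_eq h \<dots> (Fun h [Fun h [u, hprod h xs], hprod h ys])"
      by (rule ai_eq.assoc)
    also have "Fun h [u, hprod h xs] = hprod h (u # xs)"
      using False by (simp add: hprod_Cons)
    finally show ?thesis .
  qed
qed

lemma ai_eq_hprod_append_cong:
  assumes "ai_eq_hprod h us us'" and "ai_eq_hprod h vs vs'"
    and "us \<noteq> []" and "us' \<noteq> []" and "vs \<noteq> []" and "vs' \<noteq> []"
  shows "ai_eq_hprod h (us @ vs) (us' @ vs')"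
proof -
  have "ai_eq h (hprod h (us @ vs)) (Fun h [hprod h us, hprod h vs])"
    using assms by (simp add: ai_eq_hprod_append)
  also have "ai_eq h \<dots> (Fun h [hprod h us', hprod h vs'])"
    using assms by (intro ai_eq_Fun2)
  also have "ai_eq h \<dots> (hprod h (us' @ vs'))"
    using assms by (simp add: ai_eq_hprod_append ai_eq.sym)
  finally show ?thesis .
qed

lemma ai_eq_hprod_idem:
  assumes "us \<noteq> []"
  shows "ai_eq_hprod h (us @ us) us"
  using ai_eq.trans[OF ai_eq_hprod_append[OF assms assms] ai_eq.idem] .

lemma ai_eq_hprod_concat:
  "\<lbrakk>Ls \<noteq> []; \<forall>l \<in> set Ls. l \<noteq> []\<rbrakk> \<Longrightarrow> ai_eq h (hprod h (map (hprod h) Ls)) (hprod h (concat Ls))"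
proof (induction Ls)
  case Nil
  then show ?case by simp
next
  case (Cons l Ls)
  show ?case
  proof (cases "Ls = []")
    case True
    then show ?thesis by (simp add: ai_eq.refl)
  next
    case False
    have "concat Ls \<noteq> []"
      using False Cons.prems by (cases Ls) auto
    then show ?thesis
      using ai_eq_hprod_append_cong[of h "[hprod h l]" l "map (hprod h) Ls" "concat Ls"]
        Cons False by (simp add: ai_eq.refl)
  qed
qed

lemma ai_eq_hprod_drop_square:
  assumes "p \<noteq> []"
  shows "ai_eq_hprod h (p @ [s, s] @ q) (p @ [s] @ q)"
proof -
  have "ai_eq_hprod h ([s, s] @ q) ([s] @ q)"
  proof (cases "q = []")
    case False
    then show ?thesis
      using ai_eq_hprod_append_cong[of h "[s, s]" "[s]" q q] by (simp add: ai_eq.idem ai_eq.refl)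
  qed (simp add: ai_eq.idem)
  then show ?thesis
    using ai_eq_hprod_append_cong[of h p p "[s, s] @ q" "[s] @ q"] assms by (simp add: ai_eq.refl)
qed

lemma ai_eq_hprod_pair_append_cases:
  assumes "set w \<subseteq> {s, t}"
  shows "ai_eq_hprod h ([s, t] @ w) [s, t] \<or> ai_eq_hprod h ([s, t] @ w) [s, t, s]"
  using assms
proof (induction w rule: rev_induct)
  case Nil
  then show ?case by (simp add: ai_eq.refl)
next
  case (snoc c w)
  have step: "ai_eq_hprod h ([s, t] @ w @ [c]) (u @ [c])"
    if "ai_eq_hprod h ([s, t] @ w) u" "u \<noteq> []" for u
    using ai_eq_hprod_append_cong[OF that(1) ai_eq.refl] that(2) by simp
  have c: "c = s \<or> c = t"
    using snoc.prems by auto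
  from snoc consider
      (st) "ai_eq_hprod h ([s, t] @ w) [s, t]" | (sts) "ai_eq_hprod h ([s, t] @ w) [s, t, s]"
    by auto
  then show ?case
  proof cases
    case st
    show ?thesis
      using c
    proof
      assume "c = s"
      then show ?thesis using step[OF st] by simp
    next
      assume "c = t"
      then have "ai_eq_hprod h ([s, t] @ w @ [c]) ([s] @ [t, t] @ [])"
        using step[OF st] by simp
      also have "ai_eq h \<dots> (hprod h ([s] @ [t] @ []))"
        by (rule ai_eq_hprod_drop_square) simp
      finally show ?thesis by simp
    qed
  next
    case sts
    show ?thesis
      using c
    proof
      assume "c = s"
      then have "ai_eq_hprod h ([s, t] @ w @ [c]) ([s, t] @ [s, s] @ [])"
        using step[OF sts] by simp
      also have "ai_eq h \<dots> (hprod h ([s, t] @ [s] @ []))"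
        by (rule ai_eq_hprod_drop_square) simp
      finally show ?thesis by simp
    next
      assume "c = t"
      then have "ai_eq_hprod h ([s, t] @ w @ [c]) ([s, t] @ [s, t])"
        using step[OF sts] by simp
      also have "ai_eq h \<dots> (hprod h [s, t])"
        by (rule ai_eq_hprod_idem) simp
      finally show ?thesis by simp
    qed
  qed
qed

lemma ai_eq_hprod_pair_sandwich:
  assumes "set w \<subseteq> {s, t}"
  shows "ai_eq_hprod h ([s, t] @ w @ [s, t]) [s, t]"
proof -
  have st_st: "ai_eq_hprod h ([s, t] @ [s, t]) [s, t]"
    by (rule ai_eq_hprod_idem) simp
  have "ai_eq_hprod h ([s, t] @ [s, s] @ [t]) ([s, t] @ [s] @ [t])"
    by (rule ai_eq_hprod_drop_square) simp
  also have "ai_eq h \<dots> (hprod h [s, t])"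
    using st_st by simp
  finally have sts_st: "ai_eq_hprod h ([s, t, s] @ [s, t]) [s, t]"
    by simp
  from ai_eq_hprod_pair_append_cases[OF assms, of h] obtain u
    where u: "ai_eq_hprod h ([s, t] @ w) u" and u_cases: "u = [s, t] \<or> u = [s, t, s]"
    by blast
  have "ai_eq_hprod h ([s, t] @ w @ [s, t]) (u @ [s, t])"
    using ai_eq_hprod_append_cong[OF u ai_eq.refl] u_cases by auto
  also have "ai_eq h \<dots> (hprod h [s, t])"
    using u_cases st_st sts_st by auto
  finally show ?thesis .
qed

lemma subst_apply_hprod:
  "ts \<noteq> [] \<Longrightarrow> subst_apply (hprod h ts) \<sigma> = hprod h (map (\<lambda>t. subst_apply t \<sigma>) ts)"
  by (induction h ts rule: hprod.induct) auto

lemma wf_trm_hprod: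
  "\<lbrakk>ts \<noteq> []; ar h = 2; \<forall>t \<in> set ts. wf_trm ar t\<rbrakk> \<Longrightarrow> wf_trm ar (hprod h ts)"
  by (induction h ts rule: hprod.induct) auto

lemma ai_eq_subst_W_word:
  assumes ss: "set ss \<subseteq> {Var x, Fun a [], Fun b []}"
  shows "ai_eq h (subst_apply (hprod h ([Var x] @ ss @ [Var x])) (Var(x := Fun h [Fun a [], Fun b []])))
           (Fun h [Fun a [], Fun b []])"
proof -
  define \<sigma> where "\<sigma> = Var(x := Fun h [Fun a [], Fun b []])"
  define word where "word u = (if u = Var x then [Fun a [], Fun b []] else [u])" for u
  have "subst_apply (hprod h ([Var x] @ ss @ [Var x])) \<sigma>
      = hprod h (map (\<lambda>u. subst_apply u \<sigma>) ([Var x] @ ss @ [Var x]))"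
    by (simp add: subst_apply_hprod)
  also have "map (\<lambda>u. subst_apply u \<sigma>) ([Var x] @ ss @ [Var x])
      = map (hprod h) (map word ([Var x] @ ss @ [Var x]))"
    using ss by (auto simp: \<sigma>_def word_def)
  also have "ai_eq h (hprod h \<dots>) (hprod h (concat (map word ([Var x] @ ss @ [Var x]))))"
    by (rule ai_eq_hprod_concat) (auto simp: word_def)
  also have "concat (map word ([Var x] @ ss @ [Var x]))
      = [Fun a [], Fun b []] @ concat (map word ss) @ [Fun a [], Fun b []]"
    by (simp add: word_def)
  also have "ai_eq h (hprod h \<dots>) (hprod h [Fun a [], Fun b []])"
    by (rule ai_eq_hprod_pair_sandwich) (use ss in \<open>auto simp: word_def split: if_splits\<close>)
  finally show ?thesis
    unfolding \<sigma>_def by (simp add: fun_upd_def)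
qed

lemma is_subst_single:
  "wf_trm ar t \<Longrightarrow> is_subst ar (Var(x := t))"
  unfolding is_subst_def by (auto intro: finite_subset[of _ "{x}"])

theorem corollary1:
  fixes ar :: "'f \<Rightarrow> nat" and h a b :: 'f and x :: 'v
  assumes "ar h = 2" and "ar a = 0" and "ar b = 0"
    and "a \<noteq> b" and "h \<noteq> a" and "h \<noteq> b"
  shows "W_set h x a b \<subseteq>
    gen_AI ar h (Fun h [Fun a [], Fun b []]) (Fun h [Fun b [], Fun a []])"
proof
  fix r assume "r \<in> W_set h x a b"
  then obtain ss where r: "r = hprod h ([Var x] @ ss @ [Var x])"
    and ss: "set ss \<subseteq> {Var x, Fun a [], Fun b []}"
    unfolding W_set_def by blast
  have "wf_trm ar r"
    unfolding r by (rule wf_trm_hprod) (use ss assms in auto)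
  moreover have "is_subst ar (Var(x := Fun h [Fun a [], Fun b []]))"
    and "is_subst ar (Var(x := Fun h [Fun b [], Fun a []]))"
    using assms by (simp_all add: is_subst_single)
  moreover have "ai_eq h (subst_apply r (Var(x := Fun h [Fun a [], Fun b []])))
      (Fun h [Fun a [], Fun b []])"
    unfolding r using ss by (rule ai_eq_subst_W_word)
  moreover have "ai_eq h (subst_apply r (Var(x := Fun h [Fun b [], Fun a []])))
      (Fun h [Fun b [], Fun a []])"
    unfolding r using ss by (intro ai_eq_subst_W_word) auto
  ultimately show "r \<in> gen_AI ar h (Fun h [Fun a [], Fun b []]) (Fun h [Fun b [], Fun a []])"
    unfolding gen_AI_def by blast
qed

end
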